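(* Let $L>0$, $\mu\in(-\infty,0]$, $\kappa:=\mu/L$, $N\ge1$, $h_0,\dots,h_{N-1}\in(0,1]$ and $\Delta>0$, and set $p(h,\kappa)=2h-h^2\frac{-\kappa}{1-\kappa}$. Consider the gradient method $x_{i+1}=x_i-\frac{h_i}{L}\nabla f(x_i)$, $i=0,\dots,N-1$. Then: (i) there exist $f\in\mathcal{F}_{\mu,L}(\mathbb{R})$ and $x_0\in\mathbb{R}$ such that $f(x_0)-f(x_N)=\Delta$ and $\min_{0\le i\le N}|f'(x_i)|^2=\frac{2L\Delta}{\sum_{i=0}^{N-1}p(h_i,\kappa)}$; (ii) there exist $f\in\mathcal{F}_{\mu,L}(\mathbb{R})$ with global minimum value $f_*$ and $x_0\in\mathbb{R}$ such that $f(x_0)-f_*=\Delta$ and $\min_{0\le i\le N}|f'(x_i)|^2=\frac{2L\Delta}{1+\sum_{i=0}^{N-1}p(h_i,\kappa)}$. That is, for step sizes in $(0,1]$ the upper bounds $\min_{0\le i\le N}\|\nabla f(x_i)\|^2\le\frac{2L[f(x_0)-f(x_N)]}{\sum_i p(h_i,\kappa)}$ and $\min_{0\le i\le N}\|\nabla f(x_i)\|^2\le\frac{2L[f(x_0)-f_*]}{1+\sum_i p(h_i,\kappa)}$, valid for all $f\in\mathcal{F}_{\mu,L}$, are attained.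
   Context: For $L>0$ and $\mu\le L$, $\mathcal{F}_{\mu,L}(\mathbb{R}^d)$ denotes the class of differentiable functions $f:\mathbb{R}^d\to\mathbb{R}$ such that both $\frac L2\|\cdot\|^2-f$ and $f-\frac{\mu}{2}\|\cdot\|^2$ are convex. *)

theory Defs
  imports "HOL-Analysis.Analysis"
begin

definition smooth_class :: "real \<Rightarrow> real \<Rightarrow> ('a::real_inner \<Rightarrow> real) set" where
  "smooth_class mu L = {f. (\<forall>x. f differentiable (at x))
      \<and> convex_on UNIV (\<lambda>x. L / 2 * (norm x)^2 - f x)
      \<and> convex_on UNIV (\<lambda>x. f x - mu / 2 * (norm x)^2)}"

definition pfun :: "real \<Rightarrow> real \<Rightarrow> real" where
  "pfun h kappa = 2 * h - h^2 * (- kappa) / (1 - kappa)"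

primrec gd_iter :: "(real \<Rightarrow> real) \<Rightarrow> real \<Rightarrow> (nat \<Rightarrow> real) \<Rightarrow> real \<Rightarrow> nat \<Rightarrow> real" where
  "gd_iter f L h x0 0 = x0"
| "gd_iter f L h x0 (Suc i) = gd_iter f L h x0 i - h i / L * deriv f (gd_iter f L h x0 i)"

end

theory Submission
  imports Defs
begin

text \<open>The extremal function makes every iterate see the same derivative g > 0, so the gradient
  method moves left by h_i g / L in step i. Its derivative is the lower envelope of the constant g,
  of one notch per step (the lines of slopes mu and L through (x_{i+1}, g) and (x_i, g)), and of a
  ramp of slope L through (x_N, g) cut off at 0. Each piece has slopes in [mu, L], hence so does the
  envelope, and its antiderivative lies in F_{mu,L}. The area under the i-th notch is
  g^2/(2L) p(h_i, kappa); as h_i <= 1 the notch stays nonnegative, so the function is minimal where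
  the ramp reaches 0, another g^2/(2L) below f(x_N). Choosing g^2 = 2L Delta / sum p, resp.
  2L Delta / (1 + sum p), turns both bounds into equalities.\<close>

definition slopes_within :: "real \<Rightarrow> real \<Rightarrow> (real \<Rightarrow> real) \<Rightarrow> bool" where
  "slopes_within mu L D \<longleftrightarrow>
     (\<forall>x y. x \<le> y \<longrightarrow> mu * (y - x) \<le> D y - D x \<and> D y - D x \<le> L * (y - x))"

lemma slopes_within_affine:
  assumes "mu \<le> s" "s \<le> L"
  shows "slopes_within mu L (\<lambda>x. c + s * (x - t))"
  unfolding slopes_within_def
proof (intro allI impI)
  fix x y :: real assume "x \<le> y"
  then have "mu * (y - x) \<le> s * (y - x)" "s * (y - x) \<le> L * (y - x)"
    using assms by (auto intro: mult_right_mono)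
  then show "mu * (y - x) \<le> c + s * (y - t) - (c + s * (x - t))
      \<and> c + s * (y - t) - (c + s * (x - t)) \<le> L * (y - x)"
    by (simp add: algebra_simps)
qed

lemma slopes_within_const:
  assumes "mu \<le> 0" "0 \<le> L"
  shows "slopes_within mu L (\<lambda>_. c)"
  using slopes_within_affine[OF assms, of c 0] by simp

lemma slopes_within_min:
  assumes "slopes_within mu L D\<^sub>1" "slopes_within mu L D\<^sub>2"
  shows "slopes_within mu L (\<lambda>x. min (D\<^sub>1 x) (D\<^sub>2 x))"
  using assms unfolding slopes_within_def min_def
  by (smt (verit, best))

lemma slopes_within_max:
  assumes "slopes_within mu L D\<^sub>1" "slopes_within mu L D\<^sub>2"
  shows "slopes_within mu L (\<lambda>x. max (D\<^sub>1 x) (D\<^sub>2 x))"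
  using assms unfolding slopes_within_def max_def
  by (smt (verit, best))

lemma slopes_within_Min:
  assumes "finite \<F>" "\<F> \<noteq> {}" "\<And>D. D \<in> \<F> \<Longrightarrow> slopes_within mu L D"
  shows "slopes_within mu L (\<lambda>x. Min ((\<lambda>D. D x) ` \<F>))"
  using assms
proof (induction \<F> rule: finite_ne_induct)
  case (singleton D)
  then show ?case by simp
next
  case (insert D \<F>)
  then show ?case by (simp add: slopes_within_min)
qed

lemma slopes_within_imp_continuous:
  assumes "slopes_within mu L D"
  shows "continuous_on UNIV D"
proof (rule lipschitz_on_continuous_on)
  show "(\<bar>mu\<bar> + \<bar>L\<bar>)-lipschitz_on UNIV D"
    unfolding lipschitz_on_def dist_real_def
  proof (intro conjI ballI)
    fix x y :: real
    have "\<bar>D y - D x\<bar> \<le> (\<bar>mu\<bar> + \<bar>L\<bar>) * \<bar>y - x\<bar>" if "x \<le> y" for x y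
    proof -
      have "mu * (y - x) \<le> D y - D x" "D y - D x \<le> L * (y - x)"
        using assms that unfolding slopes_within_def by auto
      moreover have "\<bar>mu * (y - x)\<bar> \<le> (\<bar>mu\<bar> + \<bar>L\<bar>) * \<bar>y - x\<bar>"
        "\<bar>L * (y - x)\<bar> \<le> (\<bar>mu\<bar> + \<bar>L\<bar>) * \<bar>y - x\<bar>"
        by (simp_all add: abs_mult mult_right_mono)
      ultimately show ?thesis by linarith
    qed
    from this[of x y] this[of y x] show "\<bar>D x - D y\<bar> \<le> (\<bar>mu\<bar> + \<bar>L\<bar>) * \<bar>x - y\<bar>"
      by (cases "x \<le> y") (auto simp: abs_minus_commute)
  qed simp
qed

lemma exists_antiderivative:
  fixes D :: "real \<Rightarrow> real"
  assumes "continuous_on UNIV D"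
  obtains F where "\<And>x. (F has_real_derivative D x) (at x)"
proof -
  have "\<exists>F. \<forall>x. (F has_vector_derivative D x) (at x)"
    using einterval_antiderivative[of "-\<infinity>" "\<infinity>" D] assms
    by (simp add: continuous_on_eq_continuous_at)
  then show thesis
    using that by (auto simp: has_real_derivative_iff_has_vector_derivative)
qed

lemma smooth_class_if_derivative_slopes_within:
  fixes F D :: "real \<Rightarrow> real"
  assumes deriv: "\<And>x. (F has_real_derivative D x) (at x)" and slopes: "slopes_within mu L D"
  shows "F \<in> smooth_class mu L"
proof -
  have upper: "convex_on UNIV (\<lambda>x. L / 2 * x\<^sup>2 - F x)"
  proof (rule convex_on_realI[where f' = "\<lambda>x. L * x - D x"])
    fix x :: real
    show "((\<lambda>x. L / 2 * x\<^sup>2 - F x) has_real_derivative L * x - D x) (at x)"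
      by (auto intro!: derivative_eq_intros deriv)
  next
    fix x y :: real assume "x \<le> y"
    then show "L * x - D x \<le> L * y - D y"
      using slopes unfolding slopes_within_def by (smt (verit, ccfv_SIG) right_diff_distrib)
  qed simp
  have lower: "convex_on UNIV (\<lambda>x. F x - mu / 2 * x\<^sup>2)"
  proof (rule convex_on_realI[where f' = "\<lambda>x. D x - mu * x"])
    fix x :: real
    show "((\<lambda>x. F x - mu / 2 * x\<^sup>2) has_real_derivative D x - mu * x) (at x)"
      by (auto intro!: derivative_eq_intros deriv)
  next
    fix x y :: real assume "x \<le> y"
    then show "D x - mu * x \<le> D y - mu * y"
      using slopes unfolding slopes_within_def by (smt (verit, ccfv_SIG) right_diff_distrib)
  qed simp
  have "F differentiable (at x)" for x
    using deriv real_differentiable_def by blast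
  with upper lower show ?thesis
    unfolding smooth_class_def by simp
qed

lemma increment_of_affine_derivative:
  fixes F :: "real \<Rightarrow> real"
  assumes deriv: "\<And>x. a \<le> x \<Longrightarrow> x \<le> b \<Longrightarrow> (F has_real_derivative c + s * (x - t)) (at x)"
    and "a \<le> b"
  shows "F b - F a = c * (b - a) + s / 2 * ((b - t)\<^sup>2 - (a - t)\<^sup>2)"
proof -
  define G where "G x = F x - c * x - s / 2 * (x - t)\<^sup>2" for x
  have "(G has_real_derivative 0) (at x)" if "a \<le> x" "x \<le> b" for x
    using deriv[OF that] unfolding G_def
    by (auto intro!: derivative_eq_intros simp: power2_eq_square algebra_simps)
  then have "G b = G a"
    using DERIV_isconst_end[of a b G] \<open>a \<le> b\<close>
    by (metis DERIV_continuous continuous_at_imp_continuous_on atLeastAtMost_iff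
        greaterThanLessThan_iff less_eq_real_def)
  then show ?thesis
    unfolding G_def by (simp add: algebra_simps power2_eq_square)
qed

definition notch :: "real \<Rightarrow> real \<Rightarrow> real \<Rightarrow> real \<Rightarrow> real \<Rightarrow> real \<Rightarrow> real" where
  "notch mu L g a b x = max (g + mu * (x - a)) (g + L * (x - b))"

lemma slopes_within_notch:
  assumes "mu \<le> L"
  shows "slopes_within mu L (notch mu L g a b)"
  unfolding notch_def using assms
  by (intro slopes_within_max slopes_within_affine) auto

lemma notch_ge:
  assumes "mu \<le> 0" "0 \<le> L" "x \<le> a \<or> b \<le> x"
  shows "g \<le> notch mu L g a b x"
  using assms by (auto simp: notch_def le_max_iff_disj mult_nonpos_nonpos)

lemma notch_le:
  assumes "mu \<le> 0" "0 \<le> L" "a \<le> x" "x \<le> b"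
  shows "notch mu L g a b x \<le> g"
  using assms by (auto simp: notch_def mult_nonpos_nonneg mult_nonneg_nonpos)

lemma notch_nonneg:
  assumes "mu \<le> 0" "0 < L" and depth: "- mu * L * (b - a) \<le> (L - mu) * g"
  shows "0 \<le> notch mu L g a b x"
proof (rule ccontr)
  assume "\<not> ?thesis"
  then have "g + mu * (x - a) < 0" "g + L * (x - b) < 0"
    unfolding notch_def by auto
  with assms have "L * (g + mu * (x - a)) + (- mu) * (g + L * (x - b)) < 0"
    by (smt (verit, best) mult_pos_neg mult_nonneg_nonpos)
  moreover have "L * (g + mu * (x - a)) + (- mu) * (g + L * (x - b))
      = (L - mu) * g + mu * L * (b - a)"
    by (simp add: algebra_simps)
  ultimately show False
    using depth by simp
qed

lemma increment_of_notch_derivative: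
  fixes F :: "real \<Rightarrow> real"
  assumes "mu \<le> 0" "0 < L" "a \<le> b"
    and deriv: "\<And>x. a \<le> x \<Longrightarrow> x \<le> b \<Longrightarrow> (F has_real_derivative notch mu L g a b x) (at x)"
  shows "F b - F a = g * (b - a) + L * mu * (b - a)\<^sup>2 / (2 * (L - mu))"
proof -
  have Lmu: "0 < L - mu"
    using assms by linarith
  define t where "t = (b - a) / (L - mu)"
  define m where "m = a + L * t"
  have t: "0 \<le> t" "(L - mu) * t = b - a"
    using Lmu \<open>a \<le> b\<close> by (simp_all add: t_def)
  have m_a: "m - a = L * t" and b_m: "b - m = - mu * t"
    using t(2) by (simp_all add: m_def algebra_simps)
  have "0 \<le> L * t" "0 \<le> - mu * t"
    using t assms by (simp_all add: mult_nonpos_nonneg)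
  then have "a \<le> m" "m \<le> b"
    unfolding m_a [symmetric] b_m [symmetric] by simp_all
  have meet: "(L - mu) * m = L * b - mu * a"
  proof -
    have "(L - mu) * m = (L - mu) * a + L * ((L - mu) * t)"
      by (simp add: m_def algebra_simps)
    then show ?thesis
      unfolding t(2) by (simp add: algebra_simps)
  qed
  have left: "notch mu L g a b x = g + mu * (x - a)" if "x \<le> m" for x
  proof -
    have "(L - mu) * x \<le> (L - mu) * m"
      using that Lmu by simp
    then show ?thesis
      unfolding notch_def meet by (simp add: algebra_simps max_def)
  qed
  have right: "notch mu L g a b x = g + L * (x - b)" if "m \<le> x" for x
  proof -
    have "(L - mu) * m \<le> (L - mu) * x"
      using that Lmu by simp
    then show ?thesis
      unfolding notch_def meet by (simp add: algebra_simps max_def)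
  qed
  have "F m - F a = g * (m - a) + mu / 2 * ((m - a)\<^sup>2 - (a - a)\<^sup>2)"
    by (rule increment_of_affine_derivative)
      (use \<open>a \<le> m\<close> \<open>m \<le> b\<close> in \<open>auto simp flip: left intro!: deriv\<close>)
  moreover have "F b - F m = g * (b - m) + L / 2 * ((b - b)\<^sup>2 - (m - b)\<^sup>2)"
    by (rule increment_of_affine_derivative)
      (use \<open>a \<le> m\<close> \<open>m \<le> b\<close> in \<open>auto simp flip: right intro!: deriv\<close>)
  ultimately have "F b - F a = g * (b - a) + (mu / 2 * (m - a)\<^sup>2 - L / 2 * (b - m)\<^sup>2)"
    by (simp add: algebra_simps power2_commute)
  also have "\<dots> = g * (b - a) + L * mu * t * ((L - mu) * t) / 2"
    unfolding m_a b_m by (simp add: power2_eq_square field_simps)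
  also have "\<dots> = g * (b - a) + L * mu * (b - a)\<^sup>2 / (2 * (L - mu))"
    unfolding t(2) by (simp add: t_def power2_eq_square mult_ac)
  finally show ?thesis .
qed

locale constant_gradient_profile =
  fixes mu L g :: real and h :: "nat \<Rightarrow> real" and N :: nat
  assumes mu_nonpos: "mu \<le> 0" and L_pos: "0 < L" and g_pos: "0 < g"
    and step_pos: "\<And>i. i < N \<Longrightarrow> 0 < h i" and step_le_1: "\<And>i. i < N \<Longrightarrow> h i \<le> 1"
begin

definition knot :: "nat \<Rightarrow> real" where
  "knot i = - g / L * (\<Sum>j<i. h j)"

definition bottom :: real where
  "bottom = knot N - g / L"

definition profile :: "real \<Rightarrow> real" where
  "profile x = Min (insert g (insert (max 0 (g + L * (x - knot N)))
     ((\<lambda>j. notch mu L g (knot (Suc j)) (knot j) x) ` {..<N})))"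

lemma knot_0 [simp]: "knot 0 = 0"
  by (simp add: knot_def)

lemma knot_Suc: "knot (Suc i) = knot i - h i * g / L"
  by (simp add: knot_def algebra_simps)

lemma knot_antimono:
  assumes "j \<le> k" "k \<le> N"
  shows "knot k \<le> knot j"
proof -
  have "(\<Sum>i<j. h i) \<le> (\<Sum>i<k. h i)"
    using assms step_pos by (intro sum_mono2) (auto intro: less_imp_le)
  then show ?thesis
    unfolding knot_def using L_pos g_pos by (simp add: divide_right_mono)
qed

lemma le_profile_iff:
  "y \<le> profile x \<longleftrightarrow> y \<le> g \<and> y \<le> max 0 (g + L * (x - knot N))
     \<and> (\<forall>j<N. y \<le> notch mu L g (knot (Suc j)) (knot j) x)"
  by (auto simp: profile_def)

lemma profile_le:
  "profile x \<le> g" "profile x \<le> max 0 (g + L * (x - knot N))"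
  "j < N \<Longrightarrow> profile x \<le> notch mu L g (knot (Suc j)) (knot j) x"
  using le_profile_iff[of "profile x" x] by auto

lemma notch_ge_outside_step:
  assumes "j < N" "x \<le> knot (Suc j) \<or> knot j \<le> x"
  shows "g \<le> notch mu L g (knot (Suc j)) (knot j) x"
  using notch_ge mu_nonpos L_pos assms by simp

lemma ramp_ge_above_last_knot:
  assumes "knot N \<le> x"
  shows "g \<le> max 0 (g + L * (x - knot N))"
  using assms L_pos by (simp add: le_max_iff_disj)

lemma profile_at_knot:
  assumes "i \<le> N"
  shows "profile (knot i) = g"
proof (rule antisym)
  have "g \<le> max 0 (g + L * (knot i - knot N))"
    using knot_antimono[OF assms order.refl] by (intro ramp_ge_above_last_knot) simp
  moreover have "g \<le> notch mu L g (knot (Suc j)) (knot j) (knot i)" if j: "j < N" for j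
  proof (cases "j < i")
    case True
    then have "knot i \<le> knot (Suc j)"
      using assms by (intro knot_antimono) auto
    then show ?thesis
      using j by (intro notch_ge_outside_step) auto
  next
    case False
    then have "knot j \<le> knot i"
      using j by (intro knot_antimono) auto
    then show ?thesis
      using j by (intro notch_ge_outside_step) auto
  qed
  ultimately show "g \<le> profile (knot i)"
    by (simp add: le_profile_iff)
qed (rule profile_le)

lemma profile_on_step:
  assumes i: "i < N" and x: "knot (Suc i) \<le> x" "x \<le> knot i"
  shows "profile x = notch mu L g (knot (Suc i)) (knot i) x"
proof (rule antisym)
  let ?V = "notch mu L g (knot (Suc i)) (knot i) x"
  have "?V \<le> g"
    using notch_le mu_nonpos L_pos x by simp
  moreover have "g \<le> max 0 (g + L * (x - knot N))"
    using knot_antimono[of "Suc i" N] i x by (intro ramp_ge_above_last_knot) simp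
  moreover have "?V \<le> notch mu L g (knot (Suc j)) (knot j) x" if j: "j < N" for j
  proof -
    consider "j < i" | "j = i" | "i < j"
      by linarith
    then show ?thesis
    proof cases
      case 1
      then have "x \<le> knot (Suc j)"
        using x knot_antimono[of "Suc j" i] i by simp
      then have "g \<le> notch mu L g (knot (Suc j)) (knot j) x"
        using notch_ge_outside_step[OF j] by blast
      then show ?thesis
        using \<open>?V \<le> g\<close> by linarith
    next
      case 3
      then have "knot j \<le> x"
        using x knot_antimono[of "Suc i" j] j by simp
      then have "g \<le> notch mu L g (knot (Suc j)) (knot j) x"
        using notch_ge_outside_step[OF j] by blast
      then show ?thesis
        using \<open>?V \<le> g\<close> by linarith
    qed simp
  qed
  ultimately show "?V \<le> profile x"
    by (simp add: le_profile_iff)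
qed (use i in \<open>rule profile_le\<close>)

lemma profile_on_ramp:
  assumes "bottom \<le> x" "x \<le> knot N"
  shows "profile x = g + L * (x - knot N)"
proof (rule antisym)
  have "L * (bottom - knot N) \<le> L * (x - knot N)"
    using assms L_pos by simp
  then have ramp_nonneg: "0 \<le> g + L * (x - knot N)"
    unfolding bottom_def using L_pos by simp
  then show "profile x \<le> g + L * (x - knot N)"
    using profile_le(2)[of x] by simp
  have "L * (x - knot N) \<le> 0"
    using assms L_pos by (simp add: mult_nonneg_nonpos)
  then have ramp_le_g: "g + L * (x - knot N) \<le> g"
    by simp
  moreover have "g \<le> notch mu L g (knot (Suc j)) (knot j) x" if "j < N" for j
    using that assms knot_antimono[of "Suc j" N] by (intro notch_ge_outside_step) auto
  ultimately have "\<forall>j<N. g + L * (x - knot N) \<le> notch mu L g (knot (Suc j)) (knot j) x"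
    by (blast intro: order_trans)
  then show "g + L * (x - knot N) \<le> profile x"
    using ramp_nonneg ramp_le_g by (simp add: le_profile_iff)
qed

lemma profile_nonneg: "0 \<le> profile x"
proof -
  have "0 \<le> notch mu L g (knot (Suc j)) (knot j) x" if j: "j < N" for j
  proof (rule notch_nonneg[OF mu_nonpos L_pos])
    have "- mu * L * (knot j - knot (Suc j)) = - mu * h j * g"
      using L_pos by (simp add: knot_Suc)
    also have "\<dots> \<le> - mu * g"
      using mu_nonpos g_pos step_le_1[OF j]
      by (simp add: mult.assoc mult_left_mono_neg mult_left_le_one_le)
    also have "\<dots> \<le> (L - mu) * g"
      using L_pos g_pos by (simp add: algebra_simps)
    finally show "- mu * L * (knot j - knot (Suc j)) \<le> (L - mu) * g" .
  qed
  then show ?thesis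
    using g_pos by (simp add: le_profile_iff)
qed

lemma profile_below_bottom:
  assumes "x \<le> bottom"
  shows "profile x = 0"
proof -
  have "g + L * (x - knot N) = L * (x - bottom)"
    unfolding bottom_def using L_pos by (simp add: field_simps)
  also have "\<dots> \<le> 0"
    using assms L_pos by (simp add: mult_nonneg_nonpos)
  finally show ?thesis
    using profile_le(2)[of x] profile_nonneg[of x] by simp
qed

lemma slopes_within_profile: "slopes_within mu L profile"
proof -
  let ?\<F> = "insert (\<lambda>_. g) (insert (\<lambda>x. max 0 (g + L * (x - knot N)))
    ((\<lambda>j. notch mu L g (knot (Suc j)) (knot j)) ` {..<N}))"
  have "slopes_within mu L (\<lambda>x. Min ((\<lambda>D. D x) ` ?\<F>))"
    using mu_nonpos L_pos
    by (intro slopes_within_Min)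
      (auto intro!: slopes_within_const slopes_within_max slopes_within_affine slopes_within_notch)
  moreover have "(\<lambda>x. Min ((\<lambda>D. D x) ` ?\<F>)) = profile"
    by (simp add: profile_def image_image fun_eq_iff)
  ultimately show ?thesis
    by simp
qed

end

locale constant_gradient_function = constant_gradient_profile +
  fixes F :: "real \<Rightarrow> real"
  assumes F_deriv: "\<And>x. (F has_real_derivative profile x) (at x)"
begin

lemma F_in_smooth_class: "F \<in> smooth_class mu L"
  using F_deriv slopes_within_profile by (rule smooth_class_if_derivative_slopes_within)

lemma deriv_F: "deriv F x = profile x"
  using F_deriv by (rule DERIV_imp_deriv)

lemma gd_iter_eq_knot: "i \<le> N \<Longrightarrow> gd_iter F L h 0 i = knot i"
proof (induction i)
  case (Suc i)
  then show ?case
    by (simp add: deriv_F profile_at_knot knot_Suc)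
qed simp

lemma F_step_decrease:
  assumes i: "i < N"
  shows "F (knot i) - F (knot (Suc i)) = g\<^sup>2 / (2 * L) * pfun (h i) (mu / L)"
proof -
  have step: "knot i - knot (Suc i) = h i * g / L"
    by (simp add: knot_Suc)
  have "F (knot i) - F (knot (Suc i))
      = g * (knot i - knot (Suc i)) + L * mu * (knot i - knot (Suc i))\<^sup>2 / (2 * (L - mu))"
  proof (rule increment_of_notch_derivative[OF mu_nonpos L_pos])
    show "knot (Suc i) \<le> knot i"
      using i by (intro knot_antimono) auto
    show "(F has_real_derivative notch mu L g (knot (Suc i)) (knot i) x) (at x)"
      if "knot (Suc i) \<le> x" "x \<le> knot i" for x
      using F_deriv[of x] profile_on_step[OF i that] by simp
  qed
  also have "\<dots> = g\<^sup>2 / (2 * L) * pfun (h i) (mu / L)"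
    using L_pos mu_nonpos unfolding step pfun_def by (simp add: field_simps power2_eq_square)
  finally show ?thesis .
qed

lemma F_decrease_along_iterates:
  "F 0 - F (knot N) = g\<^sup>2 / (2 * L) * (\<Sum>i<N. pfun (h i) (mu / L))"
proof -
  have "F 0 - F (knot N) = (\<Sum>i<N. F (knot i) - F (knot (Suc i)))"
    using sum_lessThan_telescope'[of "\<lambda>i. F (knot i)" N] by simp
  also have "\<dots> = (\<Sum>i<N. g\<^sup>2 / (2 * L) * pfun (h i) (mu / L))"
    using F_step_decrease by simp
  finally show ?thesis
    by (simp add: sum_distrib_left)
qed

lemma F_decrease_on_ramp: "F (knot N) - F bottom = g\<^sup>2 / (2 * L)"
proof -
  have "bottom \<le> knot N"
    unfolding bottom_def using L_pos g_pos by simp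
  then have "F (knot N) - F bottom
      = g * (knot N - bottom) + L / 2 * ((knot N - knot N)\<^sup>2 - (bottom - knot N)\<^sup>2)"
    by (intro increment_of_affine_derivative) (auto simp flip: profile_on_ramp intro!: F_deriv)
  also have "\<dots> = g\<^sup>2 / (2 * L)"
    unfolding bottom_def using L_pos by (simp add: field_simps power2_eq_square)
  finally show ?thesis .
qed

lemma F_bottom_le: "F bottom \<le> F y"
proof (cases "bottom \<le> y")
  case True
  then show ?thesis
    by (rule deriv_nonneg_imp_mono[OF F_deriv profile_nonneg])
next
  case False
  then show ?thesis
    by (intro deriv_nonpos_imp_antimono[OF F_deriv]) (auto simp: profile_below_bottom)
qed

end

lemma exists_function_with_constant_gradient_on_gd_iterates:
  fixes mu L g :: real and h :: "nat \<Rightarrow> real" and N :: nat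
  assumes "mu \<le> 0" "0 < L" "0 < g" "\<forall>i<N. 0 < h i \<and> h i \<le> 1"
  obtains F xstar where "F \<in> smooth_class mu L"
    and "\<And>i. i \<le> N \<Longrightarrow> deriv F (gd_iter F L h 0 i) = g"
    and "F 0 - F (gd_iter F L h 0 N) = g\<^sup>2 / (2 * L) * (\<Sum>i<N. pfun (h i) (mu / L))"
    and "\<And>y. F xstar \<le> F y"
    and "F 0 - F xstar = g\<^sup>2 / (2 * L) * (1 + (\<Sum>i<N. pfun (h i) (mu / L)))"
proof -
  interpret constant_gradient_profile mu L g h N
    using assms by unfold_locales auto
  obtain F where "\<And>x. (F has_real_derivative profile x) (at x)"
    using exists_antiderivative slopes_within_imp_continuous[OF slopes_within_profile] by blast
  then interpret constant_gradient_function mu L g h N F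
    by unfold_locales
  show thesis
  proof (rule that[of F bottom])
    show "F 0 - F bottom = g\<^sup>2 / (2 * L) * (1 + (\<Sum>i<N. pfun (h i) (mu / L)))"
      using F_decrease_along_iterates F_decrease_on_ramp by (simp add: algebra_simps)
  qed (simp_all add: F_in_smooth_class gd_iter_eq_knot deriv_F profile_at_knot
      F_decrease_along_iterates F_bottom_le)
qed

lemma pfun_pos:
  assumes "kappa \<le> 0" "0 < h" "h \<le> 1"
  shows "0 < pfun h kappa"
proof -
  have "- kappa / (1 - kappa) \<le> 1"
    using assms by (subst pos_divide_le_eq) simp_all
  have "h\<^sup>2 * (- kappa) / (1 - kappa) = h\<^sup>2 * (- kappa / (1 - kappa))"
    by simp
  also have "\<dots> \<le> h\<^sup>2"
    using mult_left_mono[OF \<open>- kappa / (1 - kappa) \<le> 1\<close>, of "h\<^sup>2"] by simp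
  also have "h\<^sup>2 \<le> h"
    using assms by (simp add: power2_eq_square mult_left_le)
  finally show ?thesis
    unfolding pfun_def using assms by linarith
qed

lemma sum_pfun_pos:
  fixes N :: nat
  assumes "0 < L" "mu \<le> 0" "1 \<le> N" "\<forall>i<N. 0 < h i \<and> h i \<le> 1"
  shows "0 < (\<Sum>i<N. pfun (h i) (mu / L))"
proof (rule sum_pos)
  show "{..<N} \<noteq> {}"
    using assms by (auto simp: lessThan_empty_iff)
  show "0 < pfun (h i) (mu / L)" if "i \<in> {..<N}" for i
    using assms that by (intro pfun_pos) (auto simp: divide_nonpos_pos)
qed simp

lemma Min_sq_deriv_gd_iter_const:
  assumes "\<And>i. i \<le> N \<Longrightarrow> deriv f (gd_iter f L h x0 i) = g"
  shows "Min ((\<lambda>i. (deriv f (gd_iter f L h x0 i))\<^sup>2) ` {0..N}) = g\<^sup>2"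
  using assms by (simp add: image_constant_conv)

lemma descent_bound_attained:
  assumes "0 < L" "mu \<le> 0" "1 \<le> N" "\<forall>i<N. 0 < h i \<and> h i \<le> 1" "0 < Delta"
  shows "\<exists>f x0. f \<in> smooth_class mu L \<and> f x0 - f (gd_iter f L h x0 N) = Delta
           \<and> Min ((\<lambda>i. (deriv f (gd_iter f L h x0 i))\<^sup>2) ` {0..N})
               = 2 * L * Delta / (\<Sum>i<N. pfun (h i) (mu / L))"
proof -
  define S where "S = (\<Sum>i<N. pfun (h i) (mu / L))"
  define g where "g = sqrt (2 * L * Delta / S)"
  have "0 < S"
    unfolding S_def using assms(1-4) by (rule sum_pfun_pos)
  then have "0 < g" "g\<^sup>2 = 2 * L * Delta / S"
    using assms by (simp_all add: g_def)
  moreover obtain f xstar where f: "f \<in> smooth_class mu L"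
      "\<And>i. i \<le> N \<Longrightarrow> deriv f (gd_iter f L h 0 i) = g"
      "f 0 - f (gd_iter f L h 0 N) = g\<^sup>2 / (2 * L) * S"
      "\<And>y. f xstar \<le> f y" "f 0 - f xstar = g\<^sup>2 / (2 * L) * (1 + S)"
    by (rule exists_function_with_constant_gradient_on_gd_iterates[OF assms(2,1) \<open>0 < g\<close> assms(4),
          folded S_def]) blast
  ultimately show ?thesis
    unfolding S_def [symmetric] using \<open>0 < S\<close> assms Min_sq_deriv_gd_iter_const[OF f(2)]
    by (intro exI[of _ f] exI[of _ 0]) (simp add: f(1,3))
qed

lemma optimality_gap_bound_attained:
  assumes "0 < L" "mu \<le> 0" "1 \<le> N" "\<forall>i<N. 0 < h i \<and> h i \<le> 1" "0 < Delta"
  shows "\<exists>f x0 xstar. f \<in> smooth_class mu L \<and> (\<forall>y. f xstar \<le> f y) \<and> f x0 - f xstar = Delta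
           \<and> Min ((\<lambda>i. (deriv f (gd_iter f L h x0 i))\<^sup>2) ` {0..N})
               = 2 * L * Delta / (1 + (\<Sum>i<N. pfun (h i) (mu / L)))"
proof -
  define S where "S = (\<Sum>i<N. pfun (h i) (mu / L))"
  define g where "g = sqrt (2 * L * Delta / (1 + S))"
  have "0 < S"
    unfolding S_def using assms(1-4) by (rule sum_pfun_pos)
  then have "0 < g" "g\<^sup>2 = 2 * L * Delta / (1 + S)"
    using assms by (simp_all add: g_def)
  moreover obtain f xstar where f: "f \<in> smooth_class mu L"
      "\<And>i. i \<le> N \<Longrightarrow> deriv f (gd_iter f L h 0 i) = g"
      "f 0 - f (gd_iter f L h 0 N) = g\<^sup>2 / (2 * L) * S"
      "\<And>y. f xstar \<le> f y" "f 0 - f xstar = g\<^sup>2 / (2 * L) * (1 + S)"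
    by (rule exists_function_with_constant_gradient_on_gd_iterates[OF assms(2,1) \<open>0 < g\<close> assms(4),
          folded S_def]) blast
  ultimately show ?thesis
    unfolding S_def [symmetric] using \<open>0 < S\<close> assms Min_sq_deriv_gd_iter_const[OF f(2)]
    by (intro exI[of _ f] exI[of _ 0] exI[of _ xstar]) (simp add: f(1,4,5))
qed

theorem proposition4p3:
  fixes L mu Delta :: real and N :: nat and h :: "nat \<Rightarrow> real"
  assumes "L > 0" and "mu \<le> 0" and "N \<ge> 1"
    and "\<forall>i<N. 0 < h i \<and> h i \<le> 1" and "Delta > 0"
  shows "(\<exists>f x0. f \<in> smooth_class mu L
            \<and> f x0 - f (gd_iter f L h x0 N) = Delta
            \<and> Min ((\<lambda>i. (deriv f (gd_iter f L h x0 i))^2) ` {0..N})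
                = 2 * L * Delta / (\<Sum>i<N. pfun (h i) (mu / L)))
       \<and> (\<exists>f x0 xstar. f \<in> smooth_class mu L \<and> (\<forall>y. f xstar \<le> f y)
            \<and> f x0 - f xstar = Delta
            \<and> Min ((\<lambda>i. (deriv f (gd_iter f L h x0 i))^2) ` {0..N})
                = 2 * L * Delta / (1 + (\<Sum>i<N. pfun (h i) (mu / L))))"
  using descent_bound_attained[OF assms] optimality_gap_bound_attained[OF assms] by blast

end
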